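(* Let $X$ be a compactum and define $l X: M_\cup X\to I^{C(X,I)}$ by $$lX(\nu)(\varphi)=\max\{\nu(\varphi^{-1}([s,1]))\cdot s: s\in(0,1]\},\qquad \nu\in M_\cup X,\ \varphi\in C(X,I).$$ Let $SX\subset I^{C(X,I)}$ be the set of all functionals $\upsilon: C(X,I)\to I$ such that (1) $\upsilon(1_X)=1$, where $1_X$ is the constant function $1$; (2) $\upsilon(\lambda\cdot\varphi)=\lambda\cdot\upsilon(\varphi)$ for all $\lambda\in I$ and $\varphi\in C(X,I)$; (3) $\upsilon(\max\{\psi,\varphi\})=\max\{\upsilon(\psi),\upsilon(\varphi)\}$ for all $\psi,\varphi\in C(X,I)$ (maximum taken pointwise on the left). Then $lX(M_\cup X)=SX$.
   Context: A compactum is a compact Hausdorff space; $I=[0,1]$; $C(X,I)$ is the set of continuous maps $X\to I$. An (upper-semicontinuous) capacity on a compactum $X$ is a function $\nu$ from the closed subsets of $X$ to $I$ such that: (1) $\nu(X)=1$, $\nu(\emptyset)=0$; (2) if $F\subset G$ then $\nu(F)\le\nu(G)$; (3) if $\nu(F)<a$ then there is an open set $O\supset F$ with $\nu(B)<a$ for every closed $B\subset O$. A capacity $\nu$ is a possibility capacity if $\nu(A\cup B)=\max\{\nu(A),\nu(B)\}$ for all closed $A,B\subset X$; $M_\cup X$ denotes the set of possibility capacities on $X$. (The maximum in the definition of $lX$ exists.) *)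

theory Defs
  imports "HOL-Analysis.Analysis"
begin

text \<open>C(X,I): continuous maps from the space X into I = [0,1], represented as
  functions that are extensional on topspace X (value undefined outside).\<close>
definition CXI :: "'a topology \<Rightarrow> ('a \<Rightarrow> real) set" where
  "CXI X = {\<phi>. continuous_map X (subtopology euclideanreal {0..1}) \<phi>
                \<and> \<phi> \<in> extensional (topspace X)}"

definition capacity :: "'a topology \<Rightarrow> ('a set \<Rightarrow> real) \<Rightarrow> bool" where
  "capacity X \<nu> \<longleftrightarrow>
     \<nu> \<in> extensional {F. closedin X F}
   \<and> (\<forall>F. closedin X F \<longrightarrow> \<nu> F \<in> {0..1})
   \<and> \<nu> (topspace X) = 1 \<and> \<nu> {} = 0
   \<and> (\<forall>F G. closedin X F \<and> closedin X G \<and> F \<subseteq> G \<longrightarrow> \<nu> F \<le> \<nu> G)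
   \<and> (\<forall>F a. closedin X F \<and> \<nu> F < a \<longrightarrow>
        (\<exists>U. openin X U \<and> F \<subseteq> U \<and> (\<forall>B. closedin X B \<and> B \<subseteq> U \<longrightarrow> \<nu> B < a)))"

definition possibility_capacities :: "'a topology \<Rightarrow> ('a set \<Rightarrow> real) set" where
  "possibility_capacities X = {\<nu>. capacity X \<nu> \<and>
     (\<forall>A B. closedin X A \<and> closedin X B \<longrightarrow> \<nu> (A \<union> B) = max (\<nu> A) (\<nu> B))}"

text \<open>lX(\<nu>)(\<phi>) = max{\<nu>(\<phi>^-1[s,1]) * s : s in (0,1]} (the maximum exists, so it equals the supremum);
  lX(\<nu>) is an element of I^{C(X,I)}, represented extensionally on CXI X.\<close>
definition lX :: "'a topology \<Rightarrow> ('a set \<Rightarrow> real) \<Rightarrow> (('a \<Rightarrow> real) \<Rightarrow> real)" where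
  "lX X \<nu> = restrict (\<lambda>\<phi>. (SUP s\<in>{0<..1::real}. \<nu> {x \<in> topspace X. \<phi> x \<in> {s..1}} * s)) (CXI X)"

definition SX :: "'a topology \<Rightarrow> (('a \<Rightarrow> real) \<Rightarrow> real) set" where
  "SX X = {\<upsilon>. \<upsilon> \<in> extensional (CXI X) \<and> (\<forall>\<phi>\<in>CXI X. \<upsilon> \<phi> \<in> {0..1})
     \<and> \<upsilon> (restrict (\<lambda>x. 1) (topspace X)) = 1
     \<and> (\<forall>c\<in>{0..1::real}. \<forall>\<phi>\<in>CXI X.
          \<upsilon> (restrict (\<lambda>x. c * \<phi> x) (topspace X)) = c * \<upsilon> \<phi>)
     \<and> (\<forall>\<psi>\<in>CXI X. \<forall>\<phi>\<in>CXI X.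
          \<upsilon> (restrict (\<lambda>x. max (\<psi> x) (\<phi> x)) (topspace X)) = max (\<upsilon> \<psi>) (\<upsilon> \<phi>))}"

end

theory Submission
  imports Defs
begin

text \<open>The superlevel sets of a
  pointwise maximum are the unions of the superlevel sets, so maxitivity of \<nu> becomes
  preservation of maxima, and homogeneity follows by rescaling the level parameter.

  Conversely, a functional \<upsilon> in SX determines the capacity
  \<nu>(F) = inf {\<upsilon> \<psi> : \<psi> \<in> C(X,I), \<psi> = 1 on F}. Testing with the truncations min(1, \<phi>/s), which
  equal 1 on {\<phi> \<ge> s}, gives s \<nu>({\<phi> \<ge> s}) \<le> \<upsilon> \<phi> as well as the upper semicontinuity of \<nu>.
  For the reverse inequality, \<phi> lies below the finite maximum of the functions (k+1)/N \<psi>_k,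
  where \<psi>_k = 1 on {\<phi> \<ge> k/N} and \<upsilon> \<psi>_k is close to \<nu>({\<phi> \<ge> k/N}); this bounds \<upsilon> \<phi> by the
  integral up to an error of order 1/N.\<close>

definition superlevel :: "'a topology \<Rightarrow> ('a \<Rightarrow> real) \<Rightarrow> real \<Rightarrow> 'a set" where
  "superlevel X \<phi> s = {x \<in> topspace X. \<phi> x \<in> {s..1}}"

definition shilkret_integral :: "'a topology \<Rightarrow> ('a set \<Rightarrow> real) \<Rightarrow> ('a \<Rightarrow> real) \<Rightarrow> real" where
  "shilkret_integral X \<nu> \<phi> = (SUP s\<in>{0<..1}. \<nu> (superlevel X \<phi> s) * s)"

lemma lX_eq_restrict_shilkret_integral: "lX X \<nu> = restrict (shilkret_integral X \<nu>) (CXI X)"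
  by (simp add: lX_def shilkret_integral_def[abs_def] superlevel_def)

lemma lX_apply: "\<phi> \<in> CXI X \<Longrightarrow> lX X \<nu> \<phi> = shilkret_integral X \<nu> \<phi>"
  by (simp add: lX_eq_restrict_shilkret_integral)

section \<open>Continuous maps into the unit interval\<close>

lemma CXI_iff:
  "\<phi> \<in> CXI X \<longleftrightarrow> continuous_map X euclideanreal \<phi> \<and> (\<forall>x\<in>topspace X. 0 \<le> \<phi> x \<and> \<phi> x \<le> 1)
     \<and> \<phi> \<in> extensional (topspace X)"
  by (auto simp: CXI_def continuous_map_in_subtopology)

lemma CXI_continuous_map: "\<phi> \<in> CXI X \<Longrightarrow> continuous_map X euclideanreal \<phi>"
  by (simp add: CXI_iff)

lemma CXI_bounds: "\<phi> \<in> CXI X \<Longrightarrow> x \<in> topspace X \<Longrightarrow> 0 \<le> \<phi> x \<and> \<phi> x \<le> 1"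
  by (simp add: CXI_iff)

lemma CXI_restrict: "\<phi> \<in> CXI X \<Longrightarrow> restrict \<phi> (topspace X) = \<phi>"
  by (simp add: CXI_iff extensional_restrict)

lemma CXI_eqI: "\<phi> \<in> CXI X \<Longrightarrow> \<psi> \<in> CXI X \<Longrightarrow> (\<And>x. x \<in> topspace X \<Longrightarrow> \<phi> x = \<psi> x) \<Longrightarrow> \<phi> = \<psi>"
  by (auto simp: CXI_iff intro: extensionalityI)

lemma restrict_in_CXI:
  assumes "continuous_map X euclideanreal f" and "\<And>x. x \<in> topspace X \<Longrightarrow> 0 \<le> f x \<and> f x \<le> 1"
  shows "restrict f (topspace X) \<in> CXI X"
proof -
  have "continuous_map X euclideanreal (restrict f (topspace X))"
    using assms(1) by (rule continuous_map_eq) auto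
  then show ?thesis using assms(2) by (simp add: CXI_iff)
qed

lemma const_in_CXI: "0 \<le> c \<Longrightarrow> c \<le> 1 \<Longrightarrow> restrict (\<lambda>x. c) (topspace X) \<in> CXI X"
  by (rule restrict_in_CXI) auto

lemma scale_in_CXI:
  assumes "\<phi> \<in> CXI X" and "0 \<le> c" and "c \<le> 1"
  shows "restrict (\<lambda>x. c * \<phi> x) (topspace X) \<in> CXI X"
proof (rule restrict_in_CXI)
  show "continuous_map X euclideanreal (\<lambda>x. c * \<phi> x)"
    using CXI_continuous_map[OF assms(1)] by (auto intro: continuous_intros)
  show "0 \<le> c * \<phi> x \<and> c * \<phi> x \<le> 1" if "x \<in> topspace X" for x
    using CXI_bounds[OF assms(1) that] assms(2,3) by (auto intro: mult_le_one)
qed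

lemma max_in_CXI:
  assumes "\<phi> \<in> CXI X" and "\<psi> \<in> CXI X"
  shows "restrict (\<lambda>x. max (\<phi> x) (\<psi> x)) (topspace X) \<in> CXI X"
proof (rule restrict_in_CXI)
  show "continuous_map X euclideanreal (\<lambda>x. max (\<phi> x) (\<psi> x))"
    using CXI_continuous_map[OF assms(1)] CXI_continuous_map[OF assms(2)]
    by (auto intro: continuous_intros)
  show "0 \<le> max (\<phi> x) (\<psi> x) \<and> max (\<phi> x) (\<psi> x) \<le> 1" if "x \<in> topspace X" for x
    using CXI_bounds[OF assms(1) that] CXI_bounds[OF assms(2) that] by auto
qed

lemma truncation_in_CXI:
  assumes "\<phi> \<in> CXI X" and "0 < c"
  shows "restrict (\<lambda>x. min 1 (\<phi> x / c)) (topspace X) \<in> CXI X"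
proof (rule restrict_in_CXI)
  show "continuous_map X euclideanreal (\<lambda>x. min 1 (\<phi> x / c))"
    using CXI_continuous_map[OF assms(1)] assms(2) by (auto intro!: continuous_intros)
  show "0 \<le> min 1 (\<phi> x / c) \<and> min 1 (\<phi> x / c) \<le> 1" if "x \<in> topspace X" for x
    using CXI_bounds[OF assms(1) that] assms(2) by auto
qed

lemma closedin_superlevel: "\<phi> \<in> CXI X \<Longrightarrow> closedin X (superlevel X \<phi> s)"
  unfolding superlevel_def by (rule closedin_continuous_map_preimage[OF CXI_continuous_map]) auto

lemma superlevel_max:
  assumes "\<phi> \<in> CXI X" and "\<psi> \<in> CXI X"
  shows "superlevel X (restrict (\<lambda>x. max (\<phi> x) (\<psi> x)) (topspace X)) s
    = superlevel X \<phi> s \<union> superlevel X \<psi> s"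
  using CXI_bounds[OF assms(1)] CXI_bounds[OF assms(2)] by (auto simp: superlevel_def max_def)

lemma superlevel_scale:
  assumes "\<phi> \<in> CXI X" and "0 < c" and "c \<le> 1"
  shows "superlevel X (restrict (\<lambda>x. c * \<phi> x) (topspace X)) (c * t) = superlevel X \<phi> t"
proof -
  have "c * \<phi> x \<le> 1" if "x \<in> topspace X" for x
    using mult_le_one[of c "\<phi> x"] CXI_bounds[OF assms(1) that] assms(3) by simp
  then show ?thesis using assms(2) CXI_bounds[OF assms(1)] by (auto simp: superlevel_def)
qed

lemma superlevel_scale_empty:
  assumes "\<phi> \<in> CXI X" and "0 \<le> c" and "c < s"
  shows "superlevel X (restrict (\<lambda>x. c * \<phi> x) (topspace X)) s = {}"
proof -
  have "c * \<phi> x \<le> c" if "x \<in> topspace X" for x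
    using mult_left_mono[of "\<phi> x" 1 c] CXI_bounds[OF assms(1) that] assms(2) by simp
  then show ?thesis using assms(3) by (force simp: superlevel_def)
qed

lemma grid_index:
  fixes t :: real and N :: nat
  assumes "0 \<le> t" and "t \<le> 1" and "0 < N"
  obtains k where "k < N" and "real k / real N \<le> t" and "t \<le> (real k + 1) / real N"
proof -
  define j where "j = nat \<lfloor>real N * t\<rfloor>"
  have floor: "of_int \<lfloor>real N * t\<rfloor> \<le> real N * t" "real N * t < of_int \<lfloor>real N * t\<rfloor> + 1"
    by linarith+
  have j: "real j = of_int \<lfloor>real N * t\<rfloor>" using assms by (simp add: j_def)
  define k where "k = min (N - 1) j"
  have "k < N" using assms(3) by (simp add: k_def)
  moreover have "real k \<le> real N * t" using floor j by (simp add: k_def) linarith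
  then have "real k / real N \<le> t" using assms(3) by (simp add: pos_divide_le_eq mult.commute)
  moreover have "t \<le> (real k + 1) / real N"
  proof (cases "j < N")
    case True
    then show ?thesis using floor j assms(3) by (simp add: k_def pos_le_divide_eq mult.commute)
  next
    case False
    then have "real k + 1 = real N" using assms(3) by (simp add: k_def of_nat_diff)
    then show ?thesis using assms by simp
  qed
  ultimately show ?thesis by (rule that)
qed

section \<open>The Shilkret integral with respect to a capacity\<close>

lemma capacity_bounds: "capacity X \<nu> \<Longrightarrow> closedin X F \<Longrightarrow> 0 \<le> \<nu> F \<and> \<nu> F \<le> 1"
  by (simp add: capacity_def)

lemma capacity_topspace: "capacity X \<nu> \<Longrightarrow> \<nu> (topspace X) = 1"
  by (simp add: capacity_def)

lemma capacity_empty: "capacity X \<nu> \<Longrightarrow> \<nu> {} = 0"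
  by (simp add: capacity_def)

lemma capacity_mono:
  "capacity X \<nu> \<Longrightarrow> closedin X F \<Longrightarrow> closedin X G \<Longrightarrow> F \<subseteq> G \<Longrightarrow> \<nu> F \<le> \<nu> G"
  by (simp add: capacity_def)

lemma shilkret_integral_upper:
  assumes \<nu>: "capacity X \<nu>" and \<phi>: "\<phi> \<in> CXI X" and "0 \<le> s" "s \<le> 1"
  shows "\<nu> (superlevel X \<phi> s) * s \<le> shilkret_integral X \<nu> \<phi>"
proof -
  have summand: "0 \<le> \<nu> (superlevel X \<phi> t) * t \<and> \<nu> (superlevel X \<phi> t) * t \<le> 1"
    if "0 \<le> t" "t \<le> 1" for t
    using capacity_bounds[OF \<nu> closedin_superlevel[OF \<phi>]] that by (auto intro: mult_le_one)
  have bdd: "bdd_above ((\<lambda>t. \<nu> (superlevel X \<phi> t) * t) ` {0<..1})"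
    by (rule bdd_aboveI2[where M = 1]) (use summand in auto)
  have upper: "\<nu> (superlevel X \<phi> t) * t \<le> shilkret_integral X \<nu> \<phi>" if "t \<in> {0<..1}" for t
    unfolding shilkret_integral_def by (rule cSUP_upper[OF that bdd])
  show ?thesis
  proof (cases "s = 0")
    case True
    then show ?thesis using upper[of 1] summand[of 1] by simp
  next
    case False
    then show ?thesis using upper[of s] assms(3,4) by simp
  qed
qed

lemma shilkret_integral_least:
  "(\<And>s. s \<in> {0<..1} \<Longrightarrow> \<nu> (superlevel X \<phi> s) * s \<le> M) \<Longrightarrow> shilkret_integral X \<nu> \<phi> \<le> M"
  unfolding shilkret_integral_def by (rule cSUP_least) auto

lemma shilkret_integral_bounds:
  assumes \<nu>: "capacity X \<nu>" and \<phi>: "\<phi> \<in> CXI X"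
  shows "0 \<le> shilkret_integral X \<nu> \<phi> \<and> shilkret_integral X \<nu> \<phi> \<le> 1"
proof
  show "0 \<le> shilkret_integral X \<nu> \<phi>" using shilkret_integral_upper[OF \<nu> \<phi>, of 0] by simp
  show "shilkret_integral X \<nu> \<phi> \<le> 1"
    by (rule shilkret_integral_least)
      (use capacity_bounds[OF \<nu> closedin_superlevel[OF \<phi>]] in \<open>auto intro: mult_le_one\<close>)
qed

lemma shilkret_integral_one:
  assumes \<nu>: "capacity X \<nu>"
  shows "shilkret_integral X \<nu> (restrict (\<lambda>x. 1) (topspace X)) = 1"
proof -
  have top: "superlevel X (restrict (\<lambda>x. 1) (topspace X)) s = topspace X" if "s \<le> 1" for s
    using that by (auto simp: superlevel_def)
  show ?thesis
  proof (rule antisym)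
    show "shilkret_integral X \<nu> (restrict (\<lambda>x. 1) (topspace X)) \<le> 1"
      by (rule shilkret_integral_least) (simp add: top capacity_topspace[OF \<nu>])
    show "1 \<le> shilkret_integral X \<nu> (restrict (\<lambda>x. 1) (topspace X))"
      using shilkret_integral_upper[OF \<nu> const_in_CXI[of 1 X], of 1] top[of 1]
        capacity_topspace[OF \<nu>] by simp
  qed
qed

lemma shilkret_integral_scale_le:
  assumes \<nu>: "capacity X \<nu>" and \<phi>: "\<phi> \<in> CXI X" and c: "0 \<le> c" "c \<le> 1"
  shows "shilkret_integral X \<nu> (restrict (\<lambda>x. c * \<phi> x) (topspace X)) \<le> c * shilkret_integral X \<nu> \<phi>"
    (is "shilkret_integral X \<nu> ?\<phi>c \<le> _")
proof (rule shilkret_integral_least)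
  fix s :: real assume s: "s \<in> {0<..1}"
  show "\<nu> (superlevel X ?\<phi>c s) * s \<le> c * shilkret_integral X \<nu> \<phi>"
  proof (cases "s \<le> c")
    case True
    then have "0 < c" using s by simp
    have "\<nu> (superlevel X ?\<phi>c s) * s = c * (\<nu> (superlevel X \<phi> (s / c)) * (s / c))"
      using superlevel_scale[OF \<phi> \<open>0 < c\<close> c(2), of "s / c"] \<open>0 < c\<close> by simp
    also have "\<dots> \<le> c * shilkret_integral X \<nu> \<phi>"
      using True s \<open>0 < c\<close>
      by (intro mult_left_mono shilkret_integral_upper[OF \<nu> \<phi>]) (simp_all add: pos_divide_le_eq)
    finally show ?thesis .
  next
    case False
    then show ?thesis
      using superlevel_scale_empty[OF \<phi> c(1), of s] capacity_empty[OF \<nu>]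
        shilkret_integral_bounds[OF \<nu> \<phi>] c(1) by simp
  qed
qed

lemma shilkret_integral_scale:
  assumes \<nu>: "capacity X \<nu>" and \<phi>: "\<phi> \<in> CXI X" and c: "0 \<le> c" "c \<le> 1"
  shows "shilkret_integral X \<nu> (restrict (\<lambda>x. c * \<phi> x) (topspace X)) = c * shilkret_integral X \<nu> \<phi>"
    (is "shilkret_integral X \<nu> ?\<phi>c = _")
proof (rule antisym)
  show "shilkret_integral X \<nu> ?\<phi>c \<le> c * shilkret_integral X \<nu> \<phi>"
    by (rule shilkret_integral_scale_le[OF assms])
  show "c * shilkret_integral X \<nu> \<phi> \<le> shilkret_integral X \<nu> ?\<phi>c"
  proof (cases "c = 0")
    case True
    then show ?thesis using shilkret_integral_bounds[OF \<nu> scale_in_CXI[OF \<phi> c]] by simp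
  next
    case False
    then have "0 < c" using c(1) by simp
    have "shilkret_integral X \<nu> \<phi> \<le> shilkret_integral X \<nu> ?\<phi>c / c"
    proof (rule shilkret_integral_least)
      fix t :: real assume t: "t \<in> {0<..1}"
      have "\<nu> (superlevel X \<phi> t) * t * c = \<nu> (superlevel X ?\<phi>c (c * t)) * (c * t)"
        using superlevel_scale[OF \<phi> \<open>0 < c\<close> c(2), of t] by (simp add: ac_simps)
      also have "\<dots> \<le> shilkret_integral X \<nu> ?\<phi>c"
        using t \<open>0 < c\<close> c(2)
        by (intro shilkret_integral_upper[OF \<nu> scale_in_CXI[OF \<phi> c]]) (auto intro: mult_le_one)
      finally show "\<nu> (superlevel X \<phi> t) * t \<le> shilkret_integral X \<nu> ?\<phi>c / c"
        using \<open>0 < c\<close> by (simp add: pos_le_divide_eq)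
    qed
    then show ?thesis using \<open>0 < c\<close> by (simp add: pos_le_divide_eq mult.commute)
  qed
qed

lemma shilkret_integral_mono:
  assumes \<nu>: "capacity X \<nu>" and \<phi>: "\<phi> \<in> CXI X" and \<psi>: "\<psi> \<in> CXI X"
    and le: "\<And>x. x \<in> topspace X \<Longrightarrow> \<phi> x \<le> \<psi> x"
  shows "shilkret_integral X \<nu> \<phi> \<le> shilkret_integral X \<nu> \<psi>"
proof (rule shilkret_integral_least)
  fix s :: real assume s: "s \<in> {0<..1}"
  have "superlevel X \<phi> s \<subseteq> superlevel X \<psi> s"
    using le CXI_bounds[OF \<psi>] by (force simp: superlevel_def)
  then have "\<nu> (superlevel X \<phi> s) * s \<le> \<nu> (superlevel X \<psi> s) * s"
    using s capacity_mono[OF \<nu> closedin_superlevel[OF \<phi>] closedin_superlevel[OF \<psi>]]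
    by (simp add: mult_right_mono)
  also have "\<dots> \<le> shilkret_integral X \<nu> \<psi>"
    using s by (intro shilkret_integral_upper[OF \<nu> \<psi>]) auto
  finally show "\<nu> (superlevel X \<phi> s) * s \<le> shilkret_integral X \<nu> \<psi>" .
qed

lemma shilkret_integral_max:
  assumes \<nu>: "\<nu> \<in> possibility_capacities X" and \<phi>: "\<phi> \<in> CXI X" and \<psi>: "\<psi> \<in> CXI X"
  shows "shilkret_integral X \<nu> (restrict (\<lambda>x. max (\<phi> x) (\<psi> x)) (topspace X))
    = max (shilkret_integral X \<nu> \<phi>) (shilkret_integral X \<nu> \<psi>)"
    (is "shilkret_integral X \<nu> ?m = _")
proof (rule antisym)
  have cap: "capacity X \<nu>" using \<nu> by (simp add: possibility_capacities_def)
  show "shilkret_integral X \<nu> ?m \<le> max (shilkret_integral X \<nu> \<phi>) (shilkret_integral X \<nu> \<psi>)"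
  proof (rule shilkret_integral_least)
    fix s :: real assume s: "s \<in> {0<..1}"
    have "\<nu> (superlevel X ?m s) = max (\<nu> (superlevel X \<phi> s)) (\<nu> (superlevel X \<psi> s))"
      using \<nu> closedin_superlevel[OF \<phi>] closedin_superlevel[OF \<psi>]
      by (simp add: possibility_capacities_def superlevel_max[OF \<phi> \<psi>])
    then have "\<nu> (superlevel X ?m s) * s = max (\<nu> (superlevel X \<phi> s) * s) (\<nu> (superlevel X \<psi> s) * s)"
      using s by (simp add: max_def mult_right_mono)
    then show "\<nu> (superlevel X ?m s) * s \<le> max (shilkret_integral X \<nu> \<phi>) (shilkret_integral X \<nu> \<psi>)"
      using s shilkret_integral_upper[OF cap \<phi>, of s] shilkret_integral_upper[OF cap \<psi>, of s] by auto
  qed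
  have "shilkret_integral X \<nu> \<phi> \<le> shilkret_integral X \<nu> ?m"
    by (rule shilkret_integral_mono[OF cap \<phi> max_in_CXI[OF \<phi> \<psi>]]) simp
  moreover have "shilkret_integral X \<nu> \<psi> \<le> shilkret_integral X \<nu> ?m"
    by (rule shilkret_integral_mono[OF cap \<psi> max_in_CXI[OF \<phi> \<psi>]]) simp
  ultimately show "max (shilkret_integral X \<nu> \<phi>) (shilkret_integral X \<nu> \<psi>) \<le> shilkret_integral X \<nu> ?m"
    by simp
qed

lemma lX_in_SX:
  assumes \<nu>: "\<nu> \<in> possibility_capacities X"
  shows "lX X \<nu> \<in> SX X"
proof -
  have cap: "capacity X \<nu>" using \<nu> by (simp add: possibility_capacities_def)
  have "lX X \<nu> \<in> extensional (CXI X)"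
    by (simp add: lX_def)
  moreover have "\<forall>\<phi>\<in>CXI X. lX X \<nu> \<phi> \<in> {0..1}"
    using shilkret_integral_bounds[OF cap] by (simp add: lX_apply)
  moreover have "lX X \<nu> (restrict (\<lambda>x. 1) (topspace X)) = 1"
    using shilkret_integral_one[OF cap] by (simp add: lX_apply const_in_CXI)
  moreover have "\<forall>c\<in>{0..1}. \<forall>\<phi>\<in>CXI X.
      lX X \<nu> (restrict (\<lambda>x. c * \<phi> x) (topspace X)) = c * lX X \<nu> \<phi>"
    using shilkret_integral_scale[OF cap] by (auto simp: lX_apply scale_in_CXI)
  moreover have "\<forall>\<psi>\<in>CXI X. \<forall>\<phi>\<in>CXI X.
      lX X \<nu> (restrict (\<lambda>x. max (\<psi> x) (\<phi> x)) (topspace X)) = max (lX X \<nu> \<psi>) (lX X \<nu> \<phi>)"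
    using shilkret_integral_max[OF \<nu>] by (auto simp: lX_apply max_in_CXI)
  ultimately show ?thesis unfolding SX_def by blast
qed

section \<open>Normalized homogeneous max-preserving functionals\<close>

lemma SX_bounds: "\<upsilon> \<in> SX X \<Longrightarrow> \<phi> \<in> CXI X \<Longrightarrow> 0 \<le> \<upsilon> \<phi> \<and> \<upsilon> \<phi> \<le> 1"
  by (auto simp: SX_def)

lemma SX_one: "\<upsilon> \<in> SX X \<Longrightarrow> \<upsilon> (restrict (\<lambda>x. 1) (topspace X)) = 1"
  by (simp add: SX_def)

lemma SX_scale:
  "\<upsilon> \<in> SX X \<Longrightarrow> 0 \<le> c \<Longrightarrow> c \<le> 1 \<Longrightarrow> \<phi> \<in> CXI X \<Longrightarrow>
     \<upsilon> (restrict (\<lambda>x. c * \<phi> x) (topspace X)) = c * \<upsilon> \<phi>"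
  by (simp add: SX_def)

lemma SX_max:
  "\<upsilon> \<in> SX X \<Longrightarrow> \<phi> \<in> CXI X \<Longrightarrow> \<psi> \<in> CXI X \<Longrightarrow>
     \<upsilon> (restrict (\<lambda>x. max (\<phi> x) (\<psi> x)) (topspace X)) = max (\<upsilon> \<phi>) (\<upsilon> \<psi>)"
  by (simp add: SX_def)

lemma SX_zero: "\<upsilon> \<in> SX X \<Longrightarrow> \<upsilon> (restrict (\<lambda>x. 0) (topspace X)) = 0"
  using SX_scale[of \<upsilon> X 0 "restrict (\<lambda>x. 1) (topspace X)"] const_in_CXI[of 1 X]
  by (simp add: restrict_def)

lemma SX_mono:
  assumes "\<upsilon> \<in> SX X" "\<phi> \<in> CXI X" "\<psi> \<in> CXI X" and "\<And>x. x \<in> topspace X \<Longrightarrow> \<phi> x \<le> \<psi> x"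
  shows "\<upsilon> \<phi> \<le> \<upsilon> \<psi>"
proof -
  have "restrict (\<lambda>x. max (\<phi> x) (\<psi> x)) (topspace X) = restrict \<psi> (topspace X)"
    using assms(4) by (auto simp: restrict_def fun_eq_iff max_def)
  then have "\<upsilon> \<psi> = max (\<upsilon> \<phi>) (\<upsilon> \<psi>)"
    using SX_max[OF assms(1-3)] CXI_restrict[OF assms(3)] by simp
  then show ?thesis by simp
qed

lemma SX_truncation:
  assumes u: "\<upsilon> \<in> SX X" and \<phi>: "\<phi> \<in> CXI X" and c: "0 < c" "c \<le> 1"
  shows "c * \<upsilon> (restrict (\<lambda>x. min 1 (\<phi> x / c)) (topspace X)) \<le> \<upsilon> \<phi>"
proof -
  let ?\<theta> = "restrict (\<lambda>x. min 1 (\<phi> x / c)) (topspace X)"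
  have \<theta>: "?\<theta> \<in> CXI X" by (rule truncation_in_CXI[OF \<phi> c(1)])
  have "c * min 1 (\<phi> x / c) \<le> \<phi> x" for x
    using c(1) by (cases "\<phi> x / c \<le> 1") (simp_all add: pos_divide_le_eq)
  then have "\<upsilon> (restrict (\<lambda>x. c * ?\<theta> x) (topspace X)) \<le> \<upsilon> \<phi>"
    using c by (intro SX_mono[OF u scale_in_CXI[OF \<theta>] \<phi>]) auto
  then show ?thesis using SX_scale[OF u _ _ \<theta>] c by simp
qed

lemma SX_Max:
  assumes u: "\<upsilon> \<in> SX X" and "finite K" "K \<noteq> {}" and "\<And>k. k \<in> K \<Longrightarrow> f k \<in> CXI X"
  shows "restrict (\<lambda>x. MAX k\<in>K. f k x) (topspace X) \<in> CXI X
    \<and> \<upsilon> (restrict (\<lambda>x. MAX k\<in>K. f k x) (topspace X)) = (MAX k\<in>K. \<upsilon> (f k))"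
  using assms(2-4)
proof (induction K rule: finite_ne_induct)
  case (singleton k)
  then show ?case by (simp add: CXI_restrict)
next
  case (insert k K)
  define g where "g = restrict (\<lambda>x. MAX j\<in>K. f j x) (topspace X)"
  have f: "f k \<in> CXI X" using insert.prems by simp
  have "g \<in> CXI X \<and> \<upsilon> g = (MAX j\<in>K. \<upsilon> (f j))"
    unfolding g_def using insert.prems by (intro insert.IH) simp
  then have g: "g \<in> CXI X" "\<upsilon> g = (MAX j\<in>K. \<upsilon> (f j))" by blast+
  have "restrict (\<lambda>x. MAX j\<in>insert k K. f j x) (topspace X)
      = restrict (\<lambda>x. max (f k x) (g x)) (topspace X)"
    using insert.hyps by (simp add: g_def restrict_def fun_eq_iff)
  moreover have "(MAX j\<in>insert k K. \<upsilon> (f j)) = max (\<upsilon> (f k)) (\<upsilon> g)"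
    using insert.hyps g(2) by simp
  ultimately show ?case using max_in_CXI[OF f g(1)] SX_max[OF u f g(1)] by metis
qed

definition CXI_one_on :: "'a topology \<Rightarrow> 'a set \<Rightarrow> ('a \<Rightarrow> real) set" where
  "CXI_one_on X F = {\<psi> \<in> CXI X. \<forall>x\<in>F. \<psi> x = 1}"

lemma SX_le_grid_Max:
  fixes N :: nat
  assumes u: "\<upsilon> \<in> SX X" and \<phi>: "\<phi> \<in> CXI X" and N: "0 < N"
    and \<psi>: "\<And>k. k < N \<Longrightarrow> \<psi> k \<in> CXI_one_on X (superlevel X \<phi> (real k / real N))"
  shows "\<upsilon> \<phi> \<le> (MAX k\<in>{..<N}. (real k + 1) / real N * \<upsilon> (\<psi> k))"
proof -
  define f where "f k = restrict (\<lambda>x. (real k + 1) / real N * \<psi> k x) (topspace X)" for k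
  have ck: "0 \<le> (real k + 1) / real N" "(real k + 1) / real N \<le> 1" if "k < N" for k
    using that by auto
  have \<psi>c: "\<psi> k \<in> CXI X" if "k < N" for k using \<psi>[OF that] by (simp add: CXI_one_on_def)
  have f: "f k \<in> CXI X" if "k < N" for k
    unfolding f_def by (rule scale_in_CXI[OF \<psi>c[OF that] ck[OF that]])
  have fv: "\<upsilon> (f k) = (real k + 1) / real N * \<upsilon> (\<psi> k)" if "k < N" for k
    unfolding f_def by (rule SX_scale[OF u ck[OF that] \<psi>c[OF that]])
  let ?M = "restrict (\<lambda>x. MAX k\<in>{..<N}. f k x) (topspace X)"
  have "?M \<in> CXI X \<and> \<upsilon> ?M = (MAX k\<in>{..<N}. \<upsilon> (f k))"
    using N by (intro SX_Max[OF u]) (auto intro: f)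
  then have M: "?M \<in> CXI X" "\<upsilon> ?M = (MAX k\<in>{..<N}. \<upsilon> (f k))" by blast+
  have "\<phi> x \<le> ?M x" if x: "x \<in> topspace X" for x
  proof -
    obtain k where k: "k < N" "real k / real N \<le> \<phi> x" "\<phi> x \<le> (real k + 1) / real N"
      using grid_index[of "\<phi> x" N] CXI_bounds[OF \<phi> x] N by blast
    then have "\<psi> k x = 1"
      using \<psi>[OF k(1)] x CXI_bounds[OF \<phi> x] by (auto simp: CXI_one_on_def superlevel_def)
    then have "\<phi> x \<le> f k x" using k(3) x by (simp add: f_def)
    also have "\<dots> \<le> (MAX k\<in>{..<N}. f k x)" using k(1) by (intro Max_ge) auto
    finally show ?thesis using x by simp
  qed
  then have "\<upsilon> \<phi> \<le> \<upsilon> ?M" by (rule SX_mono[OF u \<phi> M(1)])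
  also have "\<upsilon> ?M = (MAX k\<in>{..<N}. (real k + 1) / real N * \<upsilon> (\<psi> k))"
    unfolding M(2) by (intro arg_cong[where f = Max] image_cong) (simp_all add: fv)
  finally show ?thesis .
qed

section \<open>The capacity determined by a functional\<close>

definition capacity_of_functional :: "'a topology \<Rightarrow> (('a \<Rightarrow> real) \<Rightarrow> real) \<Rightarrow> 'a set \<Rightarrow> real" where
  "capacity_of_functional X \<upsilon> = restrict (\<lambda>F. INF \<psi>\<in>CXI_one_on X F. \<upsilon> \<psi>) {F. closedin X F}"

lemma const_one_in_CXI_one_on: "F \<subseteq> topspace X \<Longrightarrow> restrict (\<lambda>x. 1) (topspace X) \<in> CXI_one_on X F"
  using const_in_CXI[of 1 X] by (auto simp: CXI_one_on_def)

lemma capacity_of_functional_le: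
  assumes "\<upsilon> \<in> SX X" and "closedin X F" and "\<psi> \<in> CXI_one_on X F"
  shows "capacity_of_functional X \<upsilon> F \<le> \<upsilon> \<psi>"
proof -
  have "bdd_below (\<upsilon> ` CXI_one_on X F)"
    using assms(1) by (intro bdd_belowI2[where m = 0]) (auto simp: CXI_one_on_def dest: SX_bounds)
  then show ?thesis using assms(2,3) by (simp add: capacity_of_functional_def cINF_lower)
qed

lemma capacity_of_functional_ge:
  assumes "closedin X F" and "\<And>\<psi>. \<psi> \<in> CXI_one_on X F \<Longrightarrow> m \<le> \<upsilon> \<psi>"
  shows "m \<le> capacity_of_functional X \<upsilon> F"
  using assms const_one_in_CXI_one_on[OF closedin_subset[OF assms(1)]]
  by (auto simp: capacity_of_functional_def intro!: cINF_greatest)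

lemma capacity_of_functional_less:
  assumes "closedin X F" and "capacity_of_functional X \<upsilon> F < a"
  obtains \<psi> where "\<psi> \<in> CXI_one_on X F" and "\<upsilon> \<psi> < a"
proof -
  have "\<not> a \<le> capacity_of_functional X \<upsilon> F" using assms(2) by simp
  then obtain \<psi> where "\<psi> \<in> CXI_one_on X F" "\<not> a \<le> \<upsilon> \<psi>"
    using capacity_of_functional_ge[OF assms(1), of a \<upsilon>] by blast
  then show ?thesis using that by simp
qed

lemma capacity_of_functional_bounds:
  assumes u: "\<upsilon> \<in> SX X" and F: "closedin X F"
  shows "0 \<le> capacity_of_functional X \<upsilon> F \<and> capacity_of_functional X \<upsilon> F \<le> 1"
proof
  show "0 \<le> capacity_of_functional X \<upsilon> F"
    by (rule capacity_of_functional_ge[OF F]) (use SX_bounds[OF u] in \<open>auto simp: CXI_one_on_def\<close>)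
  show "capacity_of_functional X \<upsilon> F \<le> 1"
    using capacity_of_functional_le[OF u F const_one_in_CXI_one_on[OF closedin_subset[OF F]]]
      SX_one[OF u] by simp
qed

lemma capacity_of_functional_mono:
  assumes u: "\<upsilon> \<in> SX X" and "closedin X F" "closedin X G" "F \<subseteq> G"
  shows "capacity_of_functional X \<upsilon> F \<le> capacity_of_functional X \<upsilon> G"
proof (rule capacity_of_functional_ge[OF assms(3)])
  fix \<psi> assume "\<psi> \<in> CXI_one_on X G"
  then have "\<psi> \<in> CXI_one_on X F" using assms(4) by (auto simp: CXI_one_on_def)
  then show "capacity_of_functional X \<upsilon> F \<le> \<upsilon> \<psi>" by (rule capacity_of_functional_le[OF u assms(2)])
qed

lemma capacity_of_functional_topspace:
  assumes u: "\<upsilon> \<in> SX X"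
  shows "capacity_of_functional X \<upsilon> (topspace X) = 1"
proof (rule antisym)
  show "capacity_of_functional X \<upsilon> (topspace X) \<le> 1"
    using capacity_of_functional_bounds[OF u closedin_topspace] by simp
  show "1 \<le> capacity_of_functional X \<upsilon> (topspace X)"
  proof (rule capacity_of_functional_ge[OF closedin_topspace])
    fix \<psi> assume "\<psi> \<in> CXI_one_on X (topspace X)"
    then have "\<psi> = restrict (\<lambda>x. 1) (topspace X)"
      by (intro CXI_eqI) (auto simp: CXI_one_on_def const_in_CXI)
    then show "1 \<le> \<upsilon> \<psi>" using SX_one[OF u] by simp
  qed
qed

lemma capacity_of_functional_empty:
  assumes u: "\<upsilon> \<in> SX X"
  shows "capacity_of_functional X \<upsilon> {} = 0"
proof (rule antisym)
  have "restrict (\<lambda>x. 0) (topspace X) \<in> CXI_one_on X {}"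
    by (simp add: CXI_one_on_def const_in_CXI)
  then show "capacity_of_functional X \<upsilon> {} \<le> 0"
    using capacity_of_functional_le[OF u closedin_empty] SX_zero[OF u] by metis
  show "0 \<le> capacity_of_functional X \<upsilon> {}"
    using capacity_of_functional_bounds[OF u closedin_empty] by simp
qed

lemma capacity_of_functional_usc:
  assumes u: "\<upsilon> \<in> SX X" and F: "closedin X F" and less: "capacity_of_functional X \<upsilon> F < a"
  shows "\<exists>U. openin X U \<and> F \<subseteq> U
    \<and> (\<forall>B. closedin X B \<and> B \<subseteq> U \<longrightarrow> capacity_of_functional X \<upsilon> B < a)"
proof -
  obtain \<psi> where \<psi>: "\<psi> \<in> CXI_one_on X F" "\<upsilon> \<psi> < a"
    using capacity_of_functional_less[OF F less] by blast
  have p: "\<psi> \<in> CXI X" using \<psi>(1) by (simp add: CXI_one_on_def)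
  have "0 < a" using \<psi>(2) SX_bounds[OF u p] by linarith
  define c where "c = (\<upsilon> \<psi> / a + 1) / 2"
  have c: "0 < c" "c < 1" "\<upsilon> \<psi> < c * a"
    using \<psi>(2) SX_bounds[OF u p] \<open>0 < a\<close> by (auto simp: c_def field_simps)
  define U where "U = {x \<in> topspace X. \<psi> x \<in> {c<..}}"
  have "openin X U"
    unfolding U_def by (rule openin_continuous_map_preimage[OF CXI_continuous_map[OF p]]) auto
  moreover have "F \<subseteq> U" using \<psi>(1) closedin_subset[OF F] c by (auto simp: CXI_one_on_def U_def)
  moreover have "capacity_of_functional X \<upsilon> B < a" if B: "closedin X B" "B \<subseteq> U" for B
  proof -
    let ?\<theta> = "restrict (\<lambda>x. min 1 (\<psi> x / c)) (topspace X)"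
    have "?\<theta> \<in> CXI_one_on X B"
      using truncation_in_CXI[OF p c(1)] B(2) c(1) by (auto simp: CXI_one_on_def U_def)
    then have "capacity_of_functional X \<upsilon> B \<le> \<upsilon> ?\<theta>" by (rule capacity_of_functional_le[OF u B(1)])
    moreover have "c * \<upsilon> ?\<theta> < c * a"
      using SX_truncation[OF u p c(1) less_imp_le[OF c(2)]] c(3) by linarith
    ultimately show ?thesis using c(1) by simp
  qed
  ultimately show ?thesis by blast
qed

lemma capacity_of_functional_Un:
  assumes u: "\<upsilon> \<in> SX X" and A: "closedin X A" and B: "closedin X B"
  shows "capacity_of_functional X \<upsilon> (A \<union> B)
    = max (capacity_of_functional X \<upsilon> A) (capacity_of_functional X \<upsilon> B)"
proof -
  let ?\<nu> = "capacity_of_functional X \<upsilon>"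
  have AB: "closedin X (A \<union> B)" using A B by blast
  show ?thesis
  proof (rule antisym)
    show "max (?\<nu> A) (?\<nu> B) \<le> ?\<nu> (A \<union> B)"
      using capacity_of_functional_mono[OF u A AB] capacity_of_functional_mono[OF u B AB] by simp
    show "?\<nu> (A \<union> B) \<le> max (?\<nu> A) (?\<nu> B)"
    proof (rule field_le_epsilon)
      fix e :: real assume e: "0 < e"
      obtain \<phi> where \<phi>: "\<phi> \<in> CXI_one_on X A" "\<upsilon> \<phi> < ?\<nu> A + e"
        using capacity_of_functional_less[OF A, where \<upsilon> = \<upsilon> and a = "?\<nu> A + e"] e by auto
      obtain \<psi> where \<psi>: "\<psi> \<in> CXI_one_on X B" "\<upsilon> \<psi> < ?\<nu> B + e"
        using capacity_of_functional_less[OF B, where \<upsilon> = \<upsilon> and a = "?\<nu> B + e"] e by auto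
      have p: "\<phi> \<in> CXI X" and q: "\<psi> \<in> CXI X" using \<phi> \<psi> by (auto simp: CXI_one_on_def)
      have "restrict (\<lambda>x. max (\<phi> x) (\<psi> x)) (topspace X) \<in> CXI_one_on X (A \<union> B)"
        using max_in_CXI[OF p q] \<phi>(1) \<psi>(1) closedin_subset[OF A] closedin_subset[OF B]
          CXI_bounds[OF p] CXI_bounds[OF q]
        by (auto simp: CXI_one_on_def max_def) (meson order.antisym subsetD)+
      then have "?\<nu> (A \<union> B) \<le> max (\<upsilon> \<phi>) (\<upsilon> \<psi>)"
        using capacity_of_functional_le[OF u AB] SX_max[OF u p q] by metis
      then show "?\<nu> (A \<union> B) \<le> max (?\<nu> A) (?\<nu> B) + e" using \<phi>(2) \<psi>(2) by auto
    qed
  qed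
qed

lemma capacity_of_functional_in_possibility_capacities:
  assumes u: "\<upsilon> \<in> SX X"
  shows "capacity_of_functional X \<upsilon> \<in> possibility_capacities X"
proof -
  have "capacity_of_functional X \<upsilon> \<in> extensional {F. closedin X F}"
    by (simp add: capacity_of_functional_def)
  then have "capacity X (capacity_of_functional X \<upsilon>)"
    unfolding capacity_def
    using capacity_of_functional_bounds[OF u] capacity_of_functional_topspace[OF u]
      capacity_of_functional_empty[OF u] capacity_of_functional_mono[OF u]
      capacity_of_functional_usc[OF u]
    by auto
  then show ?thesis
    using capacity_of_functional_Un[OF u] by (simp add: possibility_capacities_def)
qed

lemma shilkret_integral_capacity_of_functional_le:
  assumes u: "\<upsilon> \<in> SX X" and \<phi>: "\<phi> \<in> CXI X"
  shows "shilkret_integral X (capacity_of_functional X \<upsilon>) \<phi> \<le> \<upsilon> \<phi>"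
proof (rule shilkret_integral_least)
  fix s :: real assume s: "s \<in> {0<..1}"
  let ?\<theta> = "restrict (\<lambda>x. min 1 (\<phi> x / s)) (topspace X)"
  have \<theta>: "?\<theta> \<in> CXI_one_on X (superlevel X \<phi> s)"
    using truncation_in_CXI[OF \<phi>, of s] s by (auto simp: CXI_one_on_def superlevel_def)
  have "capacity_of_functional X \<upsilon> (superlevel X \<phi> s) * s \<le> \<upsilon> ?\<theta> * s"
    using s by (intro mult_right_mono capacity_of_functional_le[OF u closedin_superlevel[OF \<phi>] \<theta>]) auto
  also have "\<dots> \<le> \<upsilon> \<phi>" using SX_truncation[OF u \<phi>, of s] s by (simp add: mult.commute)
  finally show "capacity_of_functional X \<upsilon> (superlevel X \<phi> s) * s \<le> \<upsilon> \<phi>" .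
qed

lemma grid_summand_le_shilkret_integral:
  fixes k N :: nat
  assumes \<nu>: "capacity X \<nu>" and \<phi>: "\<phi> \<in> CXI X" and k: "k < N" and d: "0 \<le> d"
  shows "(real k + 1) / real N * (\<nu> (superlevel X \<phi> (real k / real N)) + d)
    \<le> shilkret_integral X \<nu> \<phi> + 1 / real N + d"
proof -
  let ?F = "superlevel X \<phi> (real k / real N)"
  have ck: "(real k + 1) / real N \<le> 1" using k by simp
  have F: "0 \<le> \<nu> ?F" "\<nu> ?F \<le> 1" using capacity_bounds[OF \<nu> closedin_superlevel[OF \<phi>]] by auto
  have "(real k + 1) / real N * (\<nu> ?F + d)
      = \<nu> ?F * (real k / real N) + \<nu> ?F / real N + (real k + 1) / real N * d"
    using k by (simp add: field_simps)
  moreover have "\<nu> ?F * (real k / real N) \<le> shilkret_integral X \<nu> \<phi>"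
    using k by (intro shilkret_integral_upper[OF \<nu> \<phi>]) auto
  moreover have "\<nu> ?F / real N \<le> 1 / real N" using F by (simp add: divide_right_mono)
  moreover have "(real k + 1) / real N * d \<le> d" using mult_right_mono[OF ck d] by simp
  ultimately show ?thesis by linarith
qed

lemma SX_le_shilkret_integral_capacity_of_functional:
  assumes u: "\<upsilon> \<in> SX X" and \<phi>: "\<phi> \<in> CXI X"
  shows "\<upsilon> \<phi> \<le> shilkret_integral X (capacity_of_functional X \<upsilon>) \<phi>"
proof (rule field_le_epsilon)
  fix e :: real assume e: "0 < e"
  let ?\<nu> = "capacity_of_functional X \<upsilon>"
  have cap: "capacity X ?\<nu>"
    using capacity_of_functional_in_possibility_capacities[OF u] by (simp add: possibility_capacities_def)
  obtain n where "inverse (real (Suc n)) < e / 2" using reals_Archimedean[of "e / 2"] e by auto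
  then obtain N :: nat where N: "0 < N" "1 / real N < e / 2" by (metis inverse_eq_divide zero_less_Suc)
  define F where "F k = superlevel X \<phi> (real k / real N)" for k
  have "\<forall>k. \<exists>\<psi>. \<psi> \<in> CXI_one_on X (F k) \<and> \<upsilon> \<psi> < ?\<nu> (F k) + e / 2"
  proof
    fix k
    have "closedin X (F k)" unfolding F_def by (rule closedin_superlevel[OF \<phi>])
    then show "\<exists>\<psi>. \<psi> \<in> CXI_one_on X (F k) \<and> \<upsilon> \<psi> < ?\<nu> (F k) + e / 2"
      by (rule capacity_of_functional_less[where \<upsilon> = \<upsilon> and a = "?\<nu> (F k) + e / 2"])
        (use e in auto)
  qed
  then obtain \<psi> where \<psi>: "\<And>k. \<psi> k \<in> CXI_one_on X (F k)" "\<And>k. \<upsilon> (\<psi> k) < ?\<nu> (F k) + e / 2"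
    by metis
  have "\<upsilon> \<phi> \<le> (MAX k\<in>{..<N}. (real k + 1) / real N * \<upsilon> (\<psi> k))"
    by (intro SX_le_grid_Max[OF u \<phi> N(1)] \<psi>(1)[unfolded F_def])
  also have "\<dots> \<le> shilkret_integral X ?\<nu> \<phi> + e"
  proof (rule Max.boundedI)
    show "(\<lambda>k. (real k + 1) / real N * \<upsilon> (\<psi> k)) ` {..<N} \<noteq> {}"
      using N(1) by (simp add: lessThan_empty_iff)
    fix y assume "y \<in> (\<lambda>k. (real k + 1) / real N * \<upsilon> (\<psi> k)) ` {..<N}"
    then obtain k where k: "k < N" and y: "y = (real k + 1) / real N * \<upsilon> (\<psi> k)" by auto
    have "y \<le> (real k + 1) / real N * (?\<nu> (F k) + e / 2)"
      unfolding y using \<psi>(2)[of k] by (intro mult_left_mono) auto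
    also have "\<dots> \<le> shilkret_integral X ?\<nu> \<phi> + 1 / real N + e / 2"
      unfolding F_def using e by (intro grid_summand_le_shilkret_integral[OF cap \<phi> k]) simp
    finally show "y \<le> shilkret_integral X ?\<nu> \<phi> + e" using N(2) by linarith
  qed simp
  finally show "\<upsilon> \<phi> \<le> shilkret_integral X ?\<nu> \<phi> + e" .
qed

lemma shilkret_integral_capacity_of_functional:
  "\<upsilon> \<in> SX X \<Longrightarrow> \<phi> \<in> CXI X \<Longrightarrow> shilkret_integral X (capacity_of_functional X \<upsilon>) \<phi> = \<upsilon> \<phi>"
  by (intro antisym shilkret_integral_capacity_of_functional_le
      SX_le_shilkret_integral_capacity_of_functional)

theorem theorem3:
  fixes X :: "'a topology"
  assumes "compact_space X" and "Hausdorff_space X"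
  shows "lX X ` possibility_capacities X = SX X"
proof
  show "lX X ` possibility_capacities X \<subseteq> SX X" using lX_in_SX by blast
  show "SX X \<subseteq> lX X ` possibility_capacities X"
  proof
    fix \<upsilon> assume u: "\<upsilon> \<in> SX X"
    have "\<upsilon> = restrict \<upsilon> (CXI X)" using u by (simp add: SX_def extensional_restrict)
    also have "\<dots> = lX X (capacity_of_functional X \<upsilon>)"
      unfolding lX_eq_restrict_shilkret_integral
      by (intro restrict_ext) (simp add: shilkret_integral_capacity_of_functional[OF u])
    finally show "\<upsilon> \<in> lX X ` possibility_capacities X"
      using capacity_of_functional_in_possibility_capacities[OF u] by blast
  qed
qed

end
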